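(* For $a\in\mathbb{C}$ and $n\in\mathbb{Z}_+$, the level $n$ Zhu algebra $A_n(M_a(1))$ of the rank one Heisenberg vertex operator algebra $M_a(1)$ is generated by the elements \[ \alpha(-2n)^{i_{2n}}\alpha(-2n+1)^{i_{2n-1}}\cdots\alpha(-1)^{i_1}\mathbf{1}+O_n(M_a(1))\quad\text{and}\quad \alpha(-1)^j\mathbf{1}+O_n(M_a(1)), \] where $i_1,\dots,i_{2n}\in\mathbb{N}$ with $0\le i_1\le n$, and $j\in\mathbb{Z}_+$.
   Context: Let $\mathfrak{h}=\mathbb{C}\alpha$ with $\langle\alpha,\alpha\rangle=1$, and $\hat{\mathfrak{h}}=\mathfrak{h}\otimes\mathbb{C}[t,t^{-1}]\oplus\mathbb{C}\mathbf{k}$ with $[\alpha(m),\alpha(p)]=m\delta_{m+p,0}\mathbf{k}$, $\mathbf{k}$ central, $\alpha(m)=\alpha\otimes t^m$. $M(1)=U(\hat{\mathfrak{h}})\otimes_{U(\mathfrak{h}\otimes\mathbb{C}[t]\oplus\mathbb{C}\mathbf{k})}\mathbb{C}\mathbf{1}$ where $\mathfrak{h}\otimes\mathbb{C}[t]$ acts trivially and $\mathbf{k}$ as $1$; it is a vertex operator algebra with $Y(\alpha(-1)\mathbf{1},x)=\sum_m\alpha(m)x^{-m-1}$, spanned by $\alpha(-k_1)\cdots\alpha(-k_j)\mathbf{1}$. $M_a(1)$ is this vertex algebra with conformal vector $\omega_a=\frac12\alpha(-1)^2\mathbf{1}+a\alpha(-2)\mathbf{1}$ (central charge $1-12a^2$);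 $\alpha(-1)\mathbf{1}$ has weight $1$. For a vertex operator algebra $V$, $n\in\mathbb{N}$, homogeneous $u$: $u\circ_nv=\mathrm{Res}_x(1+x)^{\mathrm{wt}\,u+n}Y(u,x)v\,x^{-2n-2}$, $O_n(V)=\{(L(-1)+L(0))v\}+\mathrm{span}\{u\circ_nv\}$, $A_n(V)=V/O_n(V)$ with product $u*_nv=\sum_{m=0}^n(-1)^m\binom{m+n}{n}\mathrm{Res}_x(1+x)^{\mathrm{wt}\,u+n}Y(u,x)v\,x^{-n-m-1}$. *)

theory Defs
  imports Complex_Main "HOL-Library.Multiset"
begin

text \<open>
  A basis vector alpha(-k_1)...alpha(-k_j)1 (all k_i >= 1) is encoded by the
  multiset {#k_1,...,k_j#} of positive naturals.  A vector of M(1) is a finitely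
  supported complex-valued function on such multisets.
\<close>

type_synonym vec = "nat multiset \<Rightarrow> complex"

definition vzero :: vec where "vzero = (\<lambda>_. 0)"
definition vadd :: "vec \<Rightarrow> vec \<Rightarrow> vec" where "vadd u v = (\<lambda>N. u N + v N)"
definition vscale :: "complex \<Rightarrow> vec \<Rightarrow> vec" where "vscale c v = (\<lambda>N. c * v N)"
definition vsupp :: "vec \<Rightarrow> nat multiset set" where "vsupp v = {M. v M \<noteq> 0}"

definition Mspace :: "vec set" where
  "Mspace = {v. finite (vsupp v) \<and> (\<forall>M\<in>vsupp v. 0 \<notin># M)}"

definition bvec :: "nat multiset \<Rightarrow> vec" where
  "bvec M = (\<lambda>N. if N = M then 1 else 0)"

definition lin_ext :: "(nat multiset \<Rightarrow> vec) \<Rightarrow> vec \<Rightarrow> vec" where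
  "lin_ext f v = (\<lambda>N. \<Sum>M\<in>vsupp v. v M * f M N)"

text \<open>The Heisenberg modes alpha(m): creation for m < 0, zero for m = 0,
  and alpha(m) alpha(-m)^c = m c alpha(-m)^(c-1) for m > 0.\<close>
definition alpha :: "int \<Rightarrow> vec \<Rightarrow> vec" where
  "alpha m = lin_ext (\<lambda>M.
     if m < 0 then bvec (add_mset (nat (- m)) M)
     else if m = 0 then vzero
     else vscale (of_int m * of_nat (count M (nat m))) (bvec (M - {#nat m#})))"

definition normal_prod :: "int list \<Rightarrow> vec \<Rightarrow> vec" where
  "normal_prod ms = foldr (\<lambda>m f. alpha m \<circ> f)
      (filter (\<lambda>m. m < 0) ms @ filter (\<lambda>m. 0 \<le> m) ms) id"

text \<open>Coefficient: d^(k-1)/(k-1)! alpha(x) = sum_m binom(-m-1,k-1) alpha(m) x^(-m-k).\<close>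
definition mode_coef :: "nat list \<Rightarrow> int list \<Rightarrow> complex" where
  "mode_coef ks ms = (\<Prod>r<length ks. (of_int (- (ms ! r) - 1) :: complex) gchoose (ks ! r - 1))"

text \<open>Y(alpha(-k_1)...alpha(-k_j)1, x) = :d^(k_1-1)alpha(x)/(k_1-1)! ... d^(k_j-1)alpha(x)/(k_j-1)!:,
  and u_(p) is the coefficient of x^(-p-1).  Applied to a basis vector, only finitely many
  terms are nonzero; we sum exactly over those.\<close>
definition Ymode_basis :: "nat multiset \<Rightarrow> int \<Rightarrow> nat multiset \<Rightarrow> vec" where
  "Ymode_basis M p N =
     (let ks = sorted_list_of_multiset M;
          T = (\<lambda>ms. vscale (mode_coef ks ms) (normal_prod ms (bvec N)))
      in (\<lambda>L. \<Sum>ms\<in>{ms. length ms = length ks \<and> sum_list ms + int (sum_list ks) = p + 1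
                          \<and> T ms \<noteq> vzero}. T ms L))"

definition Ymode :: "vec \<Rightarrow> int \<Rightarrow> vec \<Rightarrow> vec" where
  "Ymode u p v = (\<lambda>L. \<Sum>M\<in>vsupp u. u M * lin_ext (Ymode_basis M p) v L)"

definition omega :: "complex \<Rightarrow> vec" where
  "omega a = vadd (vscale (1/2) (bvec {#1, 1#})) (vscale a (bvec {#2#}))"

definition Lop :: "complex \<Rightarrow> int \<Rightarrow> vec \<Rightarrow> vec" where
  "Lop a m v = Ymode (omega a) (m + 1) v"

definition homog :: "nat \<Rightarrow> vec \<Rightarrow> bool" where
  "homog d u \<longleftrightarrow> u \<in> Mspace \<and> (\<forall>M\<in>vsupp u. sum_mset M = d)"

definition wproj :: "nat \<Rightarrow> vec \<Rightarrow> vec" where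
  "wproj d u = (\<lambda>M. if sum_mset M = d then u M else 0)"

text \<open>u o_n v = Res_x (1+x)^(wt u + n) Y(u,x) v x^(-2n-2), for u homogeneous of weight d.\<close>
definition circ_n :: "nat \<Rightarrow> nat \<Rightarrow> vec \<Rightarrow> vec \<Rightarrow> vec" where
  "circ_n n d u v = (\<lambda>L. \<Sum>i\<le>d + n. of_nat ((d + n) choose i) *
       Ymode u (int i - 2 * int n - 2) v L)"

definition star_hom :: "nat \<Rightarrow> nat \<Rightarrow> vec \<Rightarrow> vec \<Rightarrow> vec" where
  "star_hom n d u v = (\<lambda>L. \<Sum>m\<le>n. (-1) ^ m * of_nat ((m + n) choose n) *
       (\<Sum>i\<le>d + n. of_nat ((d + n) choose i) *
          Ymode u (int i - int n - int m - 1) v L))"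

definition star_n :: "nat \<Rightarrow> vec \<Rightarrow> vec \<Rightarrow> vec" where
  "star_n n u v = (\<lambda>L. \<Sum>d\<in>sum_mset ` vsupp u. star_hom n d (wproj d u) v L)"

inductive_set On_set :: "complex \<Rightarrow> nat \<Rightarrow> vec set" for a n where
  On_zero: "vzero \<in> On_set a n"
| On_L: "v \<in> Mspace \<Longrightarrow> vadd (Lop a (-1) v) (Lop a 0 v) \<in> On_set a n"
| On_circ: "homog d u \<Longrightarrow> v \<in> Mspace \<Longrightarrow> circ_n n d u v \<in> On_set a n"
| On_add: "x \<in> On_set a n \<Longrightarrow> y \<in> On_set a n \<Longrightarrow> vadd x y \<in> On_set a n"
| On_scale: "x \<in> On_set a n \<Longrightarrow> vscale c x \<in> On_set a n"

text \<open>Preimage in M(1) of the subalgebra of A_n(M_a(1)) generated by the classes of G: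
  the smallest subset containing G and O_n, closed under linear combinations and *_n.\<close>
inductive_set Zhu_gen :: "complex \<Rightarrow> nat \<Rightarrow> vec set \<Rightarrow> vec set" for a n G where
  Zg_gen: "x \<in> G \<Longrightarrow> x \<in> Zhu_gen a n G"
| Zg_On: "x \<in> On_set a n \<Longrightarrow> x \<in> Zhu_gen a n G"
| Zg_add: "x \<in> Zhu_gen a n G \<Longrightarrow> y \<in> Zhu_gen a n G \<Longrightarrow> vadd x y \<in> Zhu_gen a n G"
| Zg_scale: "x \<in> Zhu_gen a n G \<Longrightarrow> vscale c x \<in> Zhu_gen a n G"
| Zg_star: "x \<in> Zhu_gen a n G \<Longrightarrow> y \<in> Zhu_gen a n G \<Longrightarrow> star_n n x y \<in> Zhu_gen a n G"

end

(*
  The monomials alpha(-k_1)...alpha(-k_j)1 span M(1), so it suffices to reach each of them, by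
  well-founded induction on (number of parts, number of parts equal to 1, weight).

  A monomial alpha(-j)v with j > 2n is, up to a nonzero binomial factor, the leading term of
  alpha(-(j-2n))1 *_n v: all other terms are alpha(-r)v with 2 <= r < j, the term with r = 1
  vanishing because sum_m (-1)^m C(m+n,n) C(n+1,n+m) = 0 for n >= 1.

  A monomial alpha(-1)^c v with c > n and no part 1 in v is the leading term of
  alpha(-1)^c 1 *_n v, with coefficient sum_m (-1)^m C(m+n,n) C(c+n,n+m) = (-1)^n C(c-1,n) C(c+n,n);
  all other terms have fewer parts, or as many parts but fewer equal to 1.

  The monomials to which neither reduction applies are generators.
*)

theory Submission
  imports Defs
begin

section \<open>Monomials and the generated subalgebra\<close>

lemma vsupp_bvec [simp]: "vsupp (bvec M) = {M}"
  by (auto simp: vsupp_def bvec_def)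

lemma lin_ext_bvec [simp]: "lin_ext f (bvec M) = f M"
  unfolding lin_ext_def vsupp_bvec by (simp add: bvec_def)

lemma vscale_vscale [simp]: "vscale s (vscale t v) = vscale (s * t) v"
  by (simp add: vscale_def mult.assoc)

lemma lin_ext_vscale: "lin_ext f (vscale s v) = vscale s (lin_ext f v)"
  by (cases "s = 0") (auto simp: lin_ext_def vsupp_def vscale_def sum_distrib_left mult.assoc)

lemma alpha_vscale: "alpha m (vscale s v) = vscale s (alpha m v)"
  unfolding alpha_def by (rule lin_ext_vscale)

lemma alpha_bvec:
  "alpha m (bvec M) =
     (if m < 0 then bvec (add_mset (nat (- m)) M)
      else if m = 0 then vzero
      else vscale (of_int m * of_nat (count M (nat m))) (bvec (M - {#nat m#})))"
  unfolding alpha_def by simp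

lemma vec_eq_sum_bvec:
  assumes "finite (vsupp v)"
  shows "v = (\<lambda>L. \<Sum>M\<in>vsupp v. vscale (v M) (bvec M) L)"
proof
  fix L
  show "v L = (\<Sum>M\<in>vsupp v. vscale (v M) (bvec M) L)"
    using assms
    by (simp add: vscale_def bvec_def if_distrib[of "\<lambda>x. _ * x"] cong: if_cong)
      (simp add: vsupp_def)
qed

lemma Zhu_gen_sum:
  assumes "\<And>x. x \<in> A \<Longrightarrow> f x \<in> Zhu_gen a n G"
  shows "(\<lambda>L. \<Sum>x\<in>A. f x L) \<in> Zhu_gen a n G"
proof (cases "finite A")
  case True
  then show ?thesis using assms
  proof (induction A rule: finite_induct)
    case empty
    show ?case using Zg_On[OF On_zero] by (simp add: vzero_def)
  next
    case (insert x A)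
    then have "vadd (f x) (\<lambda>L. \<Sum>x\<in>A. f x L) \<in> Zhu_gen a n G"
      by (intro Zg_add) auto
    with insert show ?case by (simp add: vadd_def)
  qed
next
  case False
  then show ?thesis using Zg_On[OF On_zero] by (simp add: vzero_def)
qed

lemma Zhu_gen_if_bvec_supp:
  assumes "finite (vsupp v)" and "\<And>M. M \<in> vsupp v \<Longrightarrow> bvec M \<in> Zhu_gen a n G"
  shows "v \<in> Zhu_gen a n G"
proof -
  have "(\<lambda>L. \<Sum>M\<in>vsupp v. vscale (v M) (bvec M) L) \<in> Zhu_gen a n G"
    using assms(2) by (intro Zhu_gen_sum Zg_scale)
  then show ?thesis
    using vec_eq_sum_bvec[OF assms(1)] by simp
qed

lemma Zhu_gen_bvec_leading_term:
  assumes X: "X \<in> Zhu_gen a n G" and fin: "finite (vsupp X)" and XN: "X N \<noteq> 0"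
    and lower: "\<And>L. L \<in> vsupp X - {N} \<Longrightarrow> bvec L \<in> Zhu_gen a n G"
  shows "bvec N \<in> Zhu_gen a n G"
proof -
  define Y where "Y = (\<lambda>L. if L = N then 0 else X L)"
  have supp: "vsupp Y = vsupp X - {N}"
    unfolding vsupp_def Y_def by auto
  have Y: "Y \<in> Zhu_gen a n G"
    by (rule Zhu_gen_if_bvec_supp) (use fin lower in \<open>simp_all add: supp\<close>)
  have "bvec N = vscale (1 / X N) (vadd X (vscale (-1) Y))"
  proof
    fix L
    show "bvec N L = vscale (1 / X N) (vadd X (vscale (-1) Y)) L"
      using XN by (simp add: bvec_def vscale_def vadd_def Y_def)
  qed
  moreover have "vscale (1 / X N) (vadd X (vscale (-1) Y)) \<in> Zhu_gen a n G"
    by (intro Zg_scale Zg_add X Y)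
  ultimately show ?thesis
    by simp
qed

section \<open>An alternating binomial sum\<close>

definition alt_binomial_sum :: "nat \<Rightarrow> nat \<Rightarrow> complex" where
  "alt_binomial_sum n c =
     (\<Sum>m\<le>n. (-1) ^ m * of_nat ((m + n) choose n) * of_nat ((c + n) choose (n + m)))"

lemma choose_mult_swap:
  "((m + n) choose n) * ((c + n) choose (n + m)) = ((c + n) choose n) * (c choose m)"
proof (cases "m \<le> c")
  case True
  have "((c + n) choose (n + m)) * ((n + m) choose n) = ((c + n) choose n) * (c choose m)"
    using choose_mult[of n "n + m" "c + n"] True by simp
  then show ?thesis by (simp add: add.commute mult.commute)
qed (simp add: binomial_eq_0)

lemma alt_binomial_sum_closed_form:
  assumes "1 \<le> c"
  shows "alt_binomial_sum n c = (-1) ^ n * of_nat ((c - 1) choose n) * of_nat ((c + n) choose n)"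
proof -
  have "alt_binomial_sum n c = of_nat ((c + n) choose n) * (\<Sum>m\<le>n. (of_nat c gchoose m) * (-1) ^ m)"
    unfolding alt_binomial_sum_def sum_distrib_left
  proof (rule sum.cong [OF refl])
    fix m
    have "(of_nat ((m + n) choose n) * of_nat ((c + n) choose (n + m)) :: complex)
        = of_nat ((c + n) choose n) * (of_nat c gchoose m)"
      by (simp only: of_nat_mult [symmetric] choose_mult_swap) (simp add: binomial_gbinomial)
    then show "(-1) ^ m * of_nat ((m + n) choose n) * of_nat ((c + n) choose (n + m)) =
        of_nat ((c + n) choose n) * ((of_nat c gchoose m) * (-1) ^ m :: complex)"
      by (simp only: mult_ac)
  qed
  also have "\<dots> = of_nat ((c + n) choose n) * ((-1) ^ n * (of_nat (c - 1) gchoose n))"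
    using assms by (simp add: gbinomial_sum_lower_neg of_nat_diff)
  finally show ?thesis
    by (simp add: binomial_gbinomial [symmetric] mult_ac)
qed

lemma alt_binomial_sum_nonzero: "n < c \<Longrightarrow> alt_binomial_sum n c \<noteq> 0"
  by (simp add: alt_binomial_sum_closed_form)

lemma alt_binomial_sum_one_eq_0: "1 \<le> n \<Longrightarrow> alt_binomial_sum n 1 = 0"
  by (simp add: alt_binomial_sum_closed_form)

section \<open>Normally ordered products on monomials\<close>

definition annihilated :: "int list \<Rightarrow> nat multiset" where
  "annihilated ms = mset (map nat (filter (\<lambda>m. 0 < m) ms))"

definition created :: "int list \<Rightarrow> nat multiset" where
  "created ms = mset (map (\<lambda>m. nat (- m)) (filter (\<lambda>m. m < 0) ms))"

lemma annihilated_simps [simp]: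
  "annihilated [] = {#}"
  "annihilated (m # ms) = (if 0 < m then add_mset (nat m) (annihilated ms) else annihilated ms)"
  by (simp_all add: annihilated_def)

lemma created_simps [simp]:
  "created [] = {#}"
  "created (m # ms) = (if m < 0 then add_mset (nat (- m)) (created ms) else created ms)"
  by (simp_all add: created_def)

lemma size_annihilated_created: "size (annihilated ms) + size (created ms) \<le> length ms"
  by (induction ms) auto

lemma foldr_alpha_vscale: "foldr alpha ms (vscale s v) = vscale s (foldr alpha ms v)"
  by (induction ms) (simp_all add: alpha_vscale)

lemma alpha_bvec_monomial:
  "\<exists>t Q'. alpha m (bvec Q) = vscale t (bvec Q') \<and>
     (t \<noteq> 0 \<longrightarrow> Q' + annihilated [m] = Q + created [m])"
proof -
  consider "m < 0" | "m = 0" | "0 < m"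
    by linarith
  then show ?thesis
  proof cases
    case 1
    then show ?thesis
      by (intro exI [of _ 1] exI [of _ "add_mset (nat (- m)) Q"]) (simp add: alpha_bvec vscale_def)
  next
    case 2
    then show ?thesis
      by (intro exI [of _ 0] exI [of _ Q]) (simp add: alpha_bvec vscale_def vzero_def)
  next
    case 3
    have "Q - {#nat m#} + {#nat m#} = Q" if "of_int m * of_nat (count Q (nat m)) \<noteq> (0 :: complex)"
      using that by (simp add: count_inI)
    with 3 show ?thesis
      by (intro exI [of _ "of_int m * of_nat (count Q (nat m))"] exI [of _ "Q - {#nat m#}"])
        (simp add: alpha_bvec)
  qed
qed

lemma foldr_alpha_bvec:
  "\<exists>s Q. foldr alpha ms (bvec P) = vscale s (bvec Q) \<and>
     (s \<noteq> 0 \<longrightarrow> Q + annihilated ms = P + created ms)"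
proof (induction ms)
  case Nil
  show ?case
    by (intro exI [of _ 1] exI [of _ P]) (simp add: vscale_def)
next
  case (Cons m ms)
  then obtain s Q where eq: "foldr alpha ms (bvec P) = vscale s (bvec Q)"
    and Q: "s \<noteq> 0 \<longrightarrow> Q + annihilated ms = P + created ms"
    by blast
  obtain t Q' where eq': "alpha m (bvec Q) = vscale t (bvec Q')"
    and Q': "t \<noteq> 0 \<longrightarrow> Q' + annihilated [m] = Q + created [m]"
    using alpha_bvec_monomial by blast
  have "foldr alpha (m # ms) (bvec P) = vscale (s * t) (bvec Q')"
    by (simp add: eq eq' alpha_vscale)
  moreover have "Q' + annihilated (m # ms) = P + created (m # ms)" if "s * t \<noteq> 0"
  proof -
    have "Q' + annihilated (m # ms) = (Q' + annihilated [m]) + annihilated ms"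
      by simp
    also have "\<dots> = (Q + annihilated ms) + created [m]"
      using Q' that by (simp add: ac_simps)
    also have "\<dots> = P + created (m # ms)"
      using Q that by simp
    finally show ?thesis .
  qed
  ultimately show ?case
    by blast
qed

lemma normal_prod_eq_foldr:
  "normal_prod ms = foldr alpha (filter (\<lambda>m. m < 0) ms @ filter (\<lambda>m. 0 \<le> m) ms)"
proof -
  have "foldr (\<lambda>m f. alpha m \<circ> f) xs id = foldr alpha xs" for xs
    by (induction xs) auto
  then show ?thesis
    unfolding normal_prod_def by blast
qed

lemma normal_prod_bvec:
  "\<exists>s Q. normal_prod ms (bvec P) = vscale s (bvec Q) \<and>
     (s \<noteq> 0 \<longrightarrow> Q + annihilated ms = P + created ms \<and> annihilated ms \<subseteq># P)"
proof -
  define neg where "neg = filter (\<lambda>m. m < 0) ms"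
  define nonneg where "nonneg = filter (\<lambda>m. 0 \<le> m) ms"
  have modes: "annihilated nonneg = annihilated ms" "created nonneg = {#}"
    "annihilated neg = {#}" "created neg = created ms"
    unfolding neg_def nonneg_def by (induction ms) auto
  obtain s1 Q1 where eq1: "foldr alpha nonneg (bvec P) = vscale s1 (bvec Q1)"
    and Q1: "s1 \<noteq> 0 \<longrightarrow> Q1 + annihilated ms = P"
    using foldr_alpha_bvec [of nonneg P] unfolding modes by auto
  obtain s2 Q2 where eq2: "foldr alpha neg (bvec Q1) = vscale s2 (bvec Q2)"
    and Q2: "s2 \<noteq> 0 \<longrightarrow> Q2 = Q1 + created ms"
    using foldr_alpha_bvec [of neg Q1] unfolding modes by auto
  have "normal_prod ms (bvec P) = vscale (s1 * s2) (bvec Q2)"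
    by (simp add: normal_prod_eq_foldr eq1 eq2 foldr_alpha_vscale flip: neg_def nonneg_def)
  moreover have "Q2 + annihilated ms = P + created ms \<and> annihilated ms \<subseteq># P"
    if "s1 * s2 \<noteq> 0"
    using that Q1 Q2 by (auto simp: add.commute add.left_commute)
  ultimately show ?thesis
    by blast
qed

lemma normal_prod_bvec_nonzeroD:
  assumes "normal_prod ms (bvec P) L \<noteq> 0"
  shows "L + annihilated ms = P + created ms" and "annihilated ms \<subseteq># P"
proof -
  obtain s Q where eq: "normal_prod ms (bvec P) = vscale s (bvec Q)"
    and Q: "s \<noteq> 0 \<longrightarrow> Q + annihilated ms = P + created ms \<and> annihilated ms \<subseteq># P"
    using normal_prod_bvec by blast
  from assms have "s \<noteq> 0" and "L = Q"
    unfolding eq by (auto simp: vscale_def bvec_def split: if_splits)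
  with Q show "L + annihilated ms = P + created ms" and "annihilated ms \<subseteq># P"
    by simp_all
qed

lemma finite_vsupp_normal_prod: "finite (vsupp (normal_prod ms (bvec P)))"
proof -
  obtain s Q where eq: "normal_prod ms (bvec P) = vscale s (bvec Q)"
    using normal_prod_bvec by blast
  have "vsupp (normal_prod ms (bvec P)) \<subseteq> {Q}"
    unfolding eq by (auto simp: vsupp_def vscale_def bvec_def split: if_splits)
  then show ?thesis
    by (rule finite_subset) simp
qed

lemma normal_prod_bvec_no_zero_part:
  assumes "normal_prod ms (bvec P) L \<noteq> 0" and "0 \<notin># P"
  shows "0 \<notin># L"
proof -
  have "L \<subseteq># P + created ms"
    using normal_prod_bvec_nonzeroD(1) [OF assms(1)] by (metis mset_subset_eq_add_left)
  moreover have "0 \<notin># created ms"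
    by (auto simp: created_def)
  ultimately show ?thesis
    using assms(2) by (meson mset_subset_eqD union_iff)
qed

lemma normal_prod_replicate:
  "normal_prod (replicate c (-1)) (bvec P) = bvec (P + replicate_mset c 1)"
  by (induction c) (simp_all add: normal_prod_eq_foldr alpha_bvec del: foldr_replicate)

lemma replicate_if_created_ones:
  "created ms = replicate_mset (length ms) 1 \<Longrightarrow> ms = replicate (length ms) (-1)"
proof (induction ms)
  case (Cons m ms)
  show ?case
  proof (cases "m < 0")
    case True
    then have "add_mset (nat (- m)) (created ms) = add_mset 1 (replicate_mset (length ms) 1)"
      using Cons.prems by simp
    moreover from this have "nat (- m) = 1"
      by (metis in_replicate_mset replicate_mset_Suc union_single_eq_member)
    ultimately have "created ms = replicate_mset (length ms) 1" and "m = -1"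
      using True by simp_all
    with Cons.IH show ?thesis
      by simp
  next
    case False
    then have "size (created ms) = Suc (length ms)"
      using Cons.prems by simp
    then show ?thesis
      using size_annihilated_created [of ms] by simp
  qed
qed simp

lemma normal_prod_bvec_at_ones:
  assumes "length ms = c"
  shows "normal_prod ms (bvec P) (P + replicate_mset c 1) = (if ms = replicate c (-1) then 1 else 0)"
proof (cases "ms = replicate c (-1)")
  case True
  show ?thesis
    unfolding True normal_prod_replicate by (simp add: bvec_def)
next
  case False
  show ?thesis
  proof (rule ccontr)
    assume "normal_prod ms (bvec P) (P + replicate_mset c 1) \<noteq> (if ms = replicate c (-1) then 1 else 0)"
    then have "P + (replicate_mset c 1 + annihilated ms) = P + created ms"
      unfolding add.assoc [symmetric] using False by (intro normal_prod_bvec_nonzeroD(1)) simp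
    then have ones: "replicate_mset c 1 + annihilated ms = created ms"
      by simp
    have "c + size (annihilated ms) = size (created ms)"
      using arg_cong [OF ones, of size] by simp
    then have "size (annihilated ms) = 0"
      using size_annihilated_created [of ms] assms by linarith
    with ones have "created ms = replicate_mset (length ms) 1"
      using assms by simp
    with False assms show False
      using replicate_if_created_ones by blast
  qed
qed

lemma replicate_mset_if_count_eq_size:
  "count M x = size M \<Longrightarrow> M = replicate_mset (size M) x"
proof (induction M)
  case (add y M)
  then show ?case
    using count_le_size [of M x] by (cases "y = x") auto
qed simp

definition monomial_order :: "nat multiset rel" where
  "monomial_order = measures [size, \<lambda>N. count N 1, sum_mset]"

lemma wf_monomial_order: "wf monomial_order"
  unfolding monomial_order_def by (rule wf_measures)

lemma normal_prod_bvec_lower: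
  assumes "length ms = c" and "normal_prod ms (bvec P) L \<noteq> 0" and "count P 1 = 0"
  shows "L = P + replicate_mset c 1 \<or> (L, P + replicate_mset c 1) \<in> monomial_order"
proof (cases "size L < size P + c")
  case False
  have eq: "L + annihilated ms = P + created ms"
    using normal_prod_bvec_nonzeroD(1) [OF assms(2)] .
  have "size L + size (annihilated ms) = size P + size (created ms)"
    using arg_cong [OF eq, of size] by simp
  then have "size (annihilated ms) = 0" and size_created: "size (created ms) = c"
    using False size_annihilated_created [of ms] assms(1) by linarith+
  then have L: "L = P + created ms"
    using eq by simp
  show ?thesis
  proof (cases "count (created ms) 1 = c")
    case True
    then have "created ms = replicate_mset c 1"
      using replicate_mset_if_count_eq_size size_created by metis
    then show ?thesis
      using L by simp
  next
    case False
    then have "count (created ms) 1 < c"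
      using count_le_size [of "created ms" 1] size_created by linarith
    then show ?thesis
      using L assms(3) size_created by (simp add: monomial_order_def)
  qed
qed (simp add: monomial_order_def)

section \<open>The product *_n with alpha(-k)1\<close>

lemma star_n_bvec:
  "star_n n (bvec K) (bvec P) L =
     (\<Sum>m\<le>n. (-1) ^ m * of_nat ((m + n) choose n) *
       (\<Sum>i\<le>sum_mset K + n. of_nat ((sum_mset K + n) choose i) *
          Ymode_basis K (int i - int n - int m - 1) P L))"
proof -
  have "Ymode (bvec K) p (bvec P) = Ymode_basis K p P" for p
    unfolding Ymode_def vsupp_bvec lin_ext_bvec by (simp add: bvec_def)
  moreover have "wproj (sum_mset K) (bvec K) = bvec K"
    by (auto simp: wproj_def bvec_def)
  ultimately show ?thesis
    by (simp add: star_n_def star_hom_def)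
qed

lemma Ymode_basis_single:
  "Ymode_basis {#k#} p M =
     vscale ((of_int (int k - p - 2) :: complex) gchoose (k - 1)) (alpha (p + 1 - int k) (bvec M))"
proof -
  define T where "T = (\<lambda>ms. vscale (mode_coef [k] ms) (normal_prod ms (bvec M)))"
  define q where "q = p + 1 - int k"
  have modes: "{ms. length ms = 1 \<and> sum_list ms + int k = p + 1 \<and> T ms \<noteq> vzero}
      = (if T [q] = vzero then {} else {[q]})"
    by (auto simp: length_Suc_conv q_def) (metis add_implies_diff)
  have "Ymode_basis {#k#} p M =
      (\<lambda>L. \<Sum>ms\<in>{ms. length ms = 1 \<and> sum_list ms + int k = p + 1 \<and> T ms \<noteq> vzero}. T ms L)"
    unfolding Ymode_basis_def T_def Let_def by simp
  also have "\<dots> = T [q]"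
    unfolding modes by (auto simp: vzero_def)
  finally show ?thesis
    by (simp add: T_def q_def mode_coef_def normal_prod_eq_foldr)
qed

lemma star_n_single_mode:
  "star_n n (bvec {#k#}) (bvec M) L =
     (\<Sum>m\<le>n. \<Sum>i\<le>k + n. (-1) ^ m * of_nat ((m + n) choose n) * of_nat ((k + n) choose i) *
        of_nat ((n + m + k - i - 1) choose (k - 1)) *
        (if i < n + m + k \<and> L = add_mset (n + m + k - i) M then 1 else 0))"
proof -
  \<comment> \<open>the term (m, i) applies alpha(i - n - m - k), the zero mode when i = n + m + k\<close>
  have Y: "Ymode_basis {#k#} (int i - int n - int m - 1) M L =
      of_nat ((n + m + k - i - 1) choose (k - 1)) *
      (if i < n + m + k \<and> L = add_mset (n + m + k - i) M then 1 else 0)"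
    if "i \<le> k + n" for m i
  proof (cases "i < n + m + k")
    case True
    define r where "r = n + m + k - i"
    have "0 < r"
      using True by (simp add: r_def)
    have mode: "int i - int n - int m - 1 + 1 - int k = - int r"
      and coeff: "(of_int (int k - (int i - int n - int m - 1) - 2) :: complex) = of_nat (r - 1)"
      using True by (simp_all add: r_def of_nat_diff)
    have "Ymode_basis {#k#} (int i - int n - int m - 1) M =
        vscale (of_nat ((r - 1) choose (k - 1))) (bvec (add_mset r M))"
      unfolding Ymode_basis_single mode coeff binomial_gbinomial
      using \<open>0 < r\<close> by (simp add: alpha_bvec)
    then show ?thesis
      using True by (simp add: vscale_def bvec_def flip: r_def)
  next
    case False
    with that have "int i - int n - int m - 1 + 1 - int k = 0"
      by simp
    then show ?thesis
      using False by (simp add: Ymode_basis_single alpha_bvec vscale_def vzero_def)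
  qed
  have weight: "sum_mset {#k#} = k"
    by simp
  show ?thesis
    unfolding star_n_bvec sum_distrib_left weight by (intro sum.cong refl) (subst Y; simp add: mult.assoc)
qed

lemma star_n_single_mode_supp:
  assumes "star_n n (bvec {#k#}) (bvec M) L \<noteq> 0"
  obtains r where "1 \<le> r" and "r \<le> 2 * n + k" and "L = add_mset r M"
proof -
  from assms obtain m i where "m \<le> n" and "i \<le> k + n"
    and "i < n + m + k" and "L = add_mset (n + m + k - i) M"
    unfolding star_n_single_mode
    by (auto elim!: sum.not_neutral_contains_not_neutral split: if_splits)
  then show ?thesis
    using that [of "n + m + k - i"] by simp
qed

lemma finite_vsupp_star_n_single_mode: "finite (vsupp (star_n n (bvec {#k#}) (bvec M)))"
proof -
  have "vsupp (star_n n (bvec {#k#}) (bvec M)) \<subseteq> (\<lambda>r. add_mset r M) ` {1..2 * n + k}"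
    unfolding vsupp_def by (force elim: star_n_single_mode_supp)
  then show ?thesis
    by (rule finite_subset) simp
qed

lemma star_n_single_mode_coeff:
  assumes "1 \<le> r"
  shows "star_n n (bvec {#k#}) (bvec M) (add_mset r M) =
    of_nat ((r - 1) choose (k - 1)) *
    (\<Sum>m\<le>n. (-1) ^ m * of_nat ((m + n) choose n) *
       (if r \<le> n + m + k then of_nat ((k + n) choose (n + m + k - r)) else 0))"
proof -
  have inner: "(\<Sum>i\<le>k + n. (-1) ^ m * of_nat ((m + n) choose n) * of_nat ((k + n) choose i) *
        of_nat ((n + m + k - i - 1) choose (k - 1)) *
        (if i < n + m + k \<and> add_mset r M = add_mset (n + m + k - i) M then 1 else 0)) =
      of_nat ((r - 1) choose (k - 1)) * ((-1) ^ m * of_nat ((m + n) choose n) *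
       (if r \<le> n + m + k then of_nat ((k + n) choose (n + m + k - r)) else 0) :: complex)"
    (is "?lhs = ?rhs") for m
  proof -
    have "?lhs = (\<Sum>i\<le>k + n. if r \<le> n + m + k \<and> i = n + m + k - r then of_nat ((r - 1) choose (k - 1)) *
        ((-1) ^ m * of_nat ((m + n) choose n) * of_nat ((k + n) choose (n + m + k - r))) else 0)"
      using assms by (intro sum.cong refl) auto
    also have "\<dots> = ?rhs"
      by (auto simp: binomial_eq_0)
    finally show ?thesis .
  qed
  show ?thesis
    unfolding star_n_single_mode inner sum_distrib_left ..
qed

lemma star_n_single_mode_top:
  assumes "1 \<le> k"
  shows "star_n n (bvec {#k#}) (bvec M) (add_mset (2 * n + k) M) \<noteq> 0"
proof -
  have "(\<Sum>m\<le>n. (-1) ^ m * of_nat ((m + n) choose n) *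
       (if 2 * n + k \<le> n + m + k then of_nat ((k + n) choose (n + m + k - (2 * n + k))) else 0)) =
      ((-1) ^ n * of_nat ((n + n) choose n) :: complex)"
    by (subst sum.remove [of _ n]) (auto intro!: sum.neutral)
  then show ?thesis
    using assms by (simp add: star_n_single_mode_coeff)
qed

lemma star_n_single_mode_one:
  assumes "1 \<le> k" and "1 \<le> n"
  shows "star_n n (bvec {#k#}) (bvec M) (add_mset 1 M) = 0"
proof (cases "k = 1")
  case True
  then show ?thesis
    using alt_binomial_sum_one_eq_0 [OF assms(2)] by (simp add: star_n_single_mode_coeff alt_binomial_sum_def)
qed (use assms in \<open>simp add: star_n_single_mode_coeff\<close>)

section \<open>The product *_n with alpha(-1)^c 1\<close>

definition nonzero_mode_tuples :: "nat \<Rightarrow> int \<Rightarrow> nat multiset \<Rightarrow> int list set" where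
  "nonzero_mode_tuples c s P =
     {ms. length ms = c \<and> sum_list ms = s \<and> normal_prod ms (bvec P) \<noteq> vzero}"

lemma finite_nonzero_mode_tuples: "finite (nonzero_mode_tuples c s P)"
proof -
  define hi where "hi = int (sum_mset P)"
  have hi_nonneg: "0 \<le> hi"
    unfolding hi_def by (rule of_nat_0_le_iff)
  have "nonzero_mode_tuples c s P \<subseteq> {ms. set ms \<subseteq> {s - int c * hi..hi} \<and> length ms = c}"
  proof safe
    fix ms x
    assume ms: "ms \<in> nonzero_mode_tuples c s P" and x: "x \<in> set ms"
    then obtain L where "normal_prod ms (bvec P) L \<noteq> 0"
      by (auto simp: nonzero_mode_tuples_def vzero_def)
    then have annihilated: "annihilated ms \<subseteq># P"
      by (rule normal_prod_bvec_nonzeroD(2))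
    have le_hi: "y \<le> hi" if "y \<in> set ms" for y
    proof (cases "0 < y")
      case True
      with that have "nat y \<in># annihilated ms"
        by (force simp: annihilated_def)
      then have "nat y \<in># P"
        using annihilated by (meson mset_subset_eqD)
      then have "nat y \<le> sum_mset P"
        by (metis le_add1 sum_mset.remove)
      with True show ?thesis
        unfolding hi_def by linarith
    qed (use hi_nonneg in linarith)
    have "s = x + sum_list (remove1 x ms)"
      using ms sum_list_map_remove1 [OF x, of "\<lambda>y. y"] by (simp add: nonzero_mode_tuples_def)
    also have "sum_list (remove1 x ms) \<le> (\<Sum>y\<leftarrow>remove1 x ms. hi)"
      using sum_list_mono [of "remove1 x ms" "\<lambda>y. y" "\<lambda>_. hi"] le_hi
      by (metis map_ident notin_set_remove1)
    also have "\<dots> \<le> int c * hi"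
      using ms x hi_nonneg
      by (simp add: sum_list_triv nonzero_mode_tuples_def length_remove1 mult_right_mono)
    finally show "x \<in> {s - int c * hi..hi}"
      using le_hi [OF x] by simp
  qed (simp add: nonzero_mode_tuples_def)
  then show ?thesis
    by (rule finite_subset) (rule finite_lists_length_eq, simp)
qed

lemma Ymode_basis_ones:
  "Ymode_basis (replicate_mset c 1) p P =
     (\<lambda>L. \<Sum>ms\<in>nonzero_mode_tuples c (p + 1 - int c) P. normal_prod ms (bvec P) L)"
proof -
  have sorted: "sorted_list_of_multiset (replicate_mset c (1::nat)) = replicate c 1"
    by (metis mset_replicate sorted_list_of_multiset_mset sorted_replicate sorted_sort_id)
  have coef: "vscale (mode_coef (replicate c 1) ms) v = v" for ms v
    by (simp add: mode_coef_def vscale_def)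
  have "{ms. length ms = length (replicate c (1::nat)) \<and>
        sum_list ms + int (sum_list (replicate c (1::nat))) = p + 1 \<and>
        normal_prod ms (bvec P) \<noteq> vzero} = nonzero_mode_tuples c (p + 1 - int c) P"
    by (auto simp: nonzero_mode_tuples_def sum_list_replicate)
  then show ?thesis
    unfolding Ymode_basis_def Let_def sorted coef by simp
qed

lemma star_n_ones:
  "star_n n (bvec (replicate_mset c 1)) (bvec P) L =
     (\<Sum>m\<le>n. (-1) ^ m * of_nat ((m + n) choose n) *
       (\<Sum>i\<le>c + n. of_nat ((c + n) choose i) *
          (\<Sum>ms\<in>nonzero_mode_tuples c (int i - int n - int m - int c) P. normal_prod ms (bvec P) L)))"
proof -
  have "sum_mset (replicate_mset c (1::nat)) = c"
    by simp
  then show ?thesis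
    unfolding star_n_bvec Ymode_basis_ones by simp
qed

lemma star_n_ones_supp:
  assumes "star_n n (bvec (replicate_mset c 1)) (bvec P) L \<noteq> 0"
  obtains ms where "length ms = c" and "normal_prod ms (bvec P) L \<noteq> 0"
  using assms unfolding star_n_ones
  by (auto simp: nonzero_mode_tuples_def elim!: sum.not_neutral_contains_not_neutral)

lemma finite_vsupp_star_n_ones: "finite (vsupp (star_n n (bvec (replicate_mset c 1)) (bvec P)))"
proof -
  have "vsupp (star_n n (bvec (replicate_mset c 1)) (bvec P)) \<subseteq>
      (\<Union>m\<le>n. \<Union>i\<le>c + n. \<Union>ms\<in>nonzero_mode_tuples c (int i - int n - int m - int c) P.
         vsupp (normal_prod ms (bvec P)))"
    unfolding vsupp_def star_n_ones
    by (auto elim!: sum.not_neutral_contains_not_neutral) force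
  then show ?thesis
    by (rule finite_subset) (simp add: finite_nonzero_mode_tuples finite_vsupp_normal_prod)
qed

lemma star_n_ones_top:
  "star_n n (bvec (replicate_mset c 1)) (bvec P) (P + replicate_mset c 1) = alt_binomial_sum n c"
proof -
  have "normal_prod (replicate c (-1)) (bvec P) \<noteq> vzero"
    unfolding normal_prod_replicate by (auto simp: bvec_def vzero_def fun_eq_iff)
  then have member: "replicate c (-1) \<in> nonzero_mode_tuples c s P \<longleftrightarrow> s = - int c" for s
    by (auto simp: nonzero_mode_tuples_def sum_list_replicate)
  have tuples: "(\<Sum>ms\<in>nonzero_mode_tuples c s P. normal_prod ms (bvec P) (P + replicate_mset c 1)) =
      (if s = - int c then 1 else 0)" for s
  proof -
    have "(\<Sum>ms\<in>nonzero_mode_tuples c s P. normal_prod ms (bvec P) (P + replicate_mset c 1)) =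
        (\<Sum>ms\<in>nonzero_mode_tuples c s P. if ms = replicate c (-1) then 1 else 0)"
      by (intro sum.cong refl normal_prod_bvec_at_ones) (simp add: nonzero_mode_tuples_def)
    also have "\<dots> = (if s = - int c then 1 else 0)"
      using finite_nonzero_mode_tuples [of c s P] by (simp add: sum.delta member)
    finally show ?thesis .
  qed
  have "(\<Sum>i\<le>c + n. of_nat ((c + n) choose i) * (if int i - int n - int m - int c = - int c then 1 else 0)) =
      (of_nat ((c + n) choose (n + m)) :: complex)" (is "?lhs = _") for m
  proof -
    have "?lhs = (\<Sum>i\<le>c + n. if i = n + m then of_nat ((c + n) choose i) else 0)"
      by (intro sum.cong refl) auto
    also have "\<dots> = of_nat ((c + n) choose (n + m))"
      by (simp add: sum.delta binomial_eq_0)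
    finally show ?thesis .
  qed
  then show ?thesis
    unfolding star_n_ones tuples alt_binomial_sum_def by simp
qed

lemma Zhu_gen_bvec_long_mode:
  assumes "1 \<le> n" and "2 * n < j"
    and "bvec {#j - 2 * n#} \<in> Zhu_gen a n G" and "bvec M \<in> Zhu_gen a n G"
    and lower: "\<And>r. 2 \<le> r \<Longrightarrow> r < j \<Longrightarrow> bvec (add_mset r M) \<in> Zhu_gen a n G"
  shows "bvec (add_mset j M) \<in> Zhu_gen a n G"
proof -
  define k where "k = j - 2 * n"
  have "1 \<le> k" and j: "j = 2 * n + k"
    using assms(2) by (simp_all add: k_def)
  define X where "X = star_n n (bvec {#k#}) (bvec M)"
  show ?thesis
  proof (rule Zhu_gen_bvec_leading_term)
    show "X \<in> Zhu_gen a n G"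
      unfolding X_def k_def using assms(3,4) by (rule Zg_star)
    show "finite (vsupp X)"
      unfolding X_def by (rule finite_vsupp_star_n_single_mode)
    show "X (add_mset j M) \<noteq> 0"
      unfolding X_def j using \<open>1 \<le> k\<close> by (rule star_n_single_mode_top)
  next
    fix L
    assume "L \<in> vsupp X - {add_mset j M}"
    then have "X L \<noteq> 0" and "L \<noteq> add_mset j M"
      by (simp_all add: vsupp_def)
    then obtain r where "1 \<le> r" "r \<le> j" "r \<noteq> j" and L: "L = add_mset r M"
      unfolding X_def j by (auto elim: star_n_single_mode_supp)
    moreover have "r \<noteq> 1"
      using \<open>X L \<noteq> 0\<close> star_n_single_mode_one [OF \<open>1 \<le> k\<close> assms(1)] by (auto simp: X_def L)
    ultimately show "bvec L \<in> Zhu_gen a n G"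
      by (auto intro: lower)
  qed
qed

lemma filter_mset_neq_plus_replicate_mset:
  "{#x \<in># N. x \<noteq> a#} + replicate_mset (count N a) a = N"
  by (metis filter_eq_replicate_mset multiset_partition add.commute)

lemma Zhu_gen_bvec_many_ones:
  assumes "n < count N 1" and "0 \<notin># N"
    and "bvec (replicate_mset (count N 1) 1) \<in> Zhu_gen a n G"
    and "bvec {#x \<in># N. x \<noteq> 1#} \<in> Zhu_gen a n G"
    and lower: "\<And>L. 0 \<notin># L \<Longrightarrow> (L, N) \<in> monomial_order \<Longrightarrow> bvec L \<in> Zhu_gen a n G"
  shows "bvec N \<in> Zhu_gen a n G"
proof -
  define c where "c = count N 1"
  define P where "P = {#x \<in># N. x \<noteq> 1#}"
  have N: "N = P + replicate_mset c 1"
    unfolding P_def c_def filter_mset_neq_plus_replicate_mset ..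
  have P: "count P 1 = 0" "0 \<notin># P"
    using assms(2) by (auto simp: P_def)
  define X where "X = star_n n (bvec (replicate_mset c 1)) (bvec P)"
  show ?thesis
    unfolding N
  proof (rule Zhu_gen_bvec_leading_term)
    show "X \<in> Zhu_gen a n G"
      unfolding X_def c_def P_def using assms(3,4) by (rule Zg_star)
    show "finite (vsupp X)"
      unfolding X_def by (rule finite_vsupp_star_n_ones)
    show "X (P + replicate_mset c 1) \<noteq> 0"
      unfolding X_def star_n_ones_top using assms(1) by (simp add: alt_binomial_sum_nonzero c_def)
  next
    fix L
    assume "L \<in> vsupp X - {P + replicate_mset c 1}"
    then have "X L \<noteq> 0" and "L \<noteq> P + replicate_mset c 1"
      by (simp_all add: vsupp_def)
    from \<open>X L \<noteq> 0\<close> obtain ms where "length ms = c" and ms: "normal_prod ms (bvec P) L \<noteq> 0"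
      unfolding X_def by (rule star_n_ones_supp)
    with P(1) \<open>L \<noteq> P + replicate_mset c 1\<close> have "(L, N) \<in> monomial_order"
      using normal_prod_bvec_lower N by blast
    then show "bvec L \<in> Zhu_gen a n G"
      by (rule lower [OF normal_prod_bvec_no_zero_part [OF ms P(2)]])
  qed
qed

section \<open>Reduction to the generators\<close>

definition zhu_generators :: "nat \<Rightarrow> vec set" where
  "zhu_generators n =
     {bvec M | M. set_mset M \<subseteq> {1..2 * n} \<and> count M 1 \<le> n}
     \<union> {bvec (replicate_mset j 1) | j. j \<ge> 1}"

lemma Zhu_gen_generators_small:
  "set_mset M \<subseteq> {1..2 * n} \<Longrightarrow> count M 1 \<le> n \<Longrightarrow> bvec M \<in> Zhu_gen a n (zhu_generators n)"
  unfolding zhu_generators_def by (intro Zg_gen UnI1 CollectI exI [of _ M]) simp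

lemma Zhu_gen_generators_ones:
  "1 \<le> c \<Longrightarrow> bvec (replicate_mset c 1) \<in> Zhu_gen a n (zhu_generators n)"
  unfolding zhu_generators_def by (intro Zg_gen UnI2 CollectI exI [of _ c]) simp

lemma Zhu_gen_generators_single:
  assumes "1 \<le> n" and "1 \<le> k"
  shows "bvec {#k#} \<in> Zhu_gen a n (zhu_generators n)"
  using assms(2)
proof (induction k rule: less_induct)
  case (less k)
  show ?case
  proof (cases "k \<le> 2 * n")
    case True
    with less.prems assms(1) show ?thesis
      by (intro Zhu_gen_generators_small) auto
  next
    case False
    have "bvec (add_mset k {#}) \<in> Zhu_gen a n (zhu_generators n)"
    proof (rule Zhu_gen_bvec_long_mode [OF assms(1)])
      show "2 * n < k"
        using False by simp
      show "bvec {#k - 2 * n#} \<in> Zhu_gen a n (zhu_generators n)"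
        using False assms(1) by (intro less.IH) auto
      show "bvec {#} \<in> Zhu_gen a n (zhu_generators n)"
        by (rule Zhu_gen_generators_small) simp_all
      show "bvec {#r#} \<in> Zhu_gen a n (zhu_generators n)" if "2 \<le> r" and "r < k" for r
        using that by (intro less.IH) auto
    qed
    then show ?thesis
      by simp
  qed
qed

lemma Zhu_gen_generators_bvec:
  assumes "1 \<le> n" and "0 \<notin># N"
  shows "bvec N \<in> Zhu_gen a n (zhu_generators n)"
  using assms(2)
proof (induction N rule: wf_induct_rule [OF wf_monomial_order])
  case (1 N)
  consider (long) j M where "2 * n < j" and "N = add_mset j M"
    | (ones) "n < count N 1"
    | (small) "set_mset N \<subseteq> {1..2 * n}" and "count N 1 \<le> n"
    using "1.prems" by (metis atLeastAtMost_iff less_one not_le subsetI multi_member_split)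
  then show ?case
  proof cases
    case long
    have "j \<noteq> 1"
      using long(1) assms(1) by simp
    show ?thesis
      unfolding long(2)
    proof (rule Zhu_gen_bvec_long_mode [OF assms(1) long(1)])
      show "bvec {#j - 2 * n#} \<in> Zhu_gen a n (zhu_generators n)"
        using long(1) by (intro Zhu_gen_generators_single assms(1)) simp
      show "bvec M \<in> Zhu_gen a n (zhu_generators n)"
        using "1.prems" by (intro "1.IH") (auto simp: long(2) monomial_order_def)
      show "bvec (add_mset r M) \<in> Zhu_gen a n (zhu_generators n)" if "2 \<le> r" and "r < j" for r
        using that "1.prems" \<open>j \<noteq> 1\<close> by (intro "1.IH") (auto simp: long(2) monomial_order_def)
    qed
  next
    case ones
    have "size {#x \<in># N. x \<noteq> 1#} < size N"
      using arg_cong [OF filter_mset_neq_plus_replicate_mset [of 1 N], of size] ones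
      by (simp del: count_greater_zero_iff)
    show ?thesis
    proof (rule Zhu_gen_bvec_many_ones [OF ones "1.prems"])
      show "bvec (replicate_mset (count N 1) 1) \<in> Zhu_gen a n (zhu_generators n)"
        using ones by (intro Zhu_gen_generators_ones) linarith
      show "bvec {#x \<in># N. x \<noteq> 1#} \<in> Zhu_gen a n (zhu_generators n)"
        using \<open>size {#x \<in># N. x \<noteq> 1#} < size N\<close> "1.prems"
        by (intro "1.IH") (auto simp: monomial_order_def)
    qed (rule "1.IH")
  next
    case small
    then show ?thesis
      by (rule Zhu_gen_generators_small)
  qed
qed

theorem theorem6p8:
  fixes a :: complex and n :: nat
  assumes "n \<ge> 1"
  shows "Mspace \<subseteq> Zhu_gen a n
           ({bvec M | M. set_mset M \<subseteq> {1..2 * n} \<and> count M 1 \<le> n}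
            \<union> {bvec (replicate_mset j 1) | j. j \<ge> 1})"
  unfolding zhu_generators_def [symmetric]
proof
  fix v
  assume v: "v \<in> Mspace"
  show "v \<in> Zhu_gen a n (zhu_generators n)"
  proof (rule Zhu_gen_if_bvec_supp)
    show "finite (vsupp v)"
      using v by (simp add: Mspace_def)
    show "bvec M \<in> Zhu_gen a n (zhu_generators n)" if "M \<in> vsupp v" for M
      using v that by (intro Zhu_gen_generators_bvec assms) (auto simp: Mspace_def)
  qed
qed

end
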